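(* Let $L$ and $L_1$ be linear partial differential operators in $\mathbb{R}^n$ connected by an Intertwining Laplace Transformation, i.e. there exist differential operators $X_1, X_2, H \in \mathbf{F}[D_{x_1},\ldots,D_{x_n}]$ with $H\neq 0$ such that $L = X_1X_2 - H$, the element $\omega = -[X_2,H]H^{-1}$ of the skew Ore field $\mathbf{F}(D_{x_1},\ldots,D_{x_n})$ is a differential operator (belongs to $\mathbf{F}[D_{x_1},\ldots,D_{x_n}]$), and $L_1 = X_2X_1 + \omega X_1 - H$. Then the principal symbols of $L$ and $L_1$ coincide, $\mathrm{Sym}\, L = \mathrm{Sym}\, L_1$ (even if $\mathrm{ord}\, H \geq \mathrm{ord}\, L$).
   Context: $\mathbf{F}$ is a differential field of functions of $x_1,\ldots,x_n$ (differentially closed, large enough), $\mathbf{F}[D_{x_1},\ldots,D_{x_n}]$ is the ring of linear partial differential operators with coefficients in $\mathbf{F}$, and $\mathbf{F}(D_{x_1},\ldots,D_{x_n})$ is its skew Ore field of formal fractions $P^{-1}Q$ (with $P^{-1}Q\sim K^{-1}N$ iff $SP=TK$, $SQ=TN$ for some nonzero $S,T$); the order of $P^{-1}Q$ is $\mathrm{ord}\,Q-\mathrm{ord}\,P$. $[A,B]=AB-BA$. $\mathrm{Sym}$ denotes the principal symbol (highest-order part, as a polynomial in commuting variables $\xi_i$ corresponding to $D_{x_i}$). *)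

theory Defs
  imports Main
begin

text \<open>Linear partial differential operators in n variables x_0,...,x_{n-1} with
coefficients in a (commutative) differential field 'a with n commuting derivations
d 0, ..., d (n-1).  Multi-indices are functions nat => nat vanishing outside {..<n};
an operator P = sum_alpha P alpha D^alpha is represented by its coefficient
function P :: (nat => nat) => 'a (finite support, supported on multi-indices).\<close>

definition diff_field :: "nat \<Rightarrow> (nat \<Rightarrow> 'a::field \<Rightarrow> 'a) \<Rightarrow> bool" where
  "diff_field n d \<longleftrightarrow>
     (\<forall>i<n. \<forall>a b. d i (a + b) = d i a + d i b \<and> d i (a * b) = d i a * b + a * d i b) \<and>
     (\<forall>i<n. \<forall>j<n. \<forall>a. d i (d j a) = d j (d i a))"

definition multi_idx :: "nat \<Rightarrow> (nat \<Rightarrow> nat) set" where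
  "multi_idx n = {\<alpha>. \<forall>i\<ge>n. \<alpha> i = 0}"

definition mdeg :: "nat \<Rightarrow> (nat \<Rightarrow> nat) \<Rightarrow> nat" where
  "mdeg n \<alpha> = (\<Sum>i<n. \<alpha> i)"

definition dmono :: "(nat \<Rightarrow> 'a \<Rightarrow> 'a) \<Rightarrow> nat \<Rightarrow> (nat \<Rightarrow> nat) \<Rightarrow> 'a \<Rightarrow> 'a" where
  "dmono d n \<gamma> = foldr (\<lambda>i f. (d i ^^ \<gamma> i) \<circ> f) [0..<n] id"

definition mbinom :: "nat \<Rightarrow> (nat \<Rightarrow> nat) \<Rightarrow> (nat \<Rightarrow> nat) \<Rightarrow> nat" where
  "mbinom n \<alpha> \<gamma> = (\<Prod>i<n. \<alpha> i choose \<gamma> i)"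

definition dsupp :: "((nat \<Rightarrow> nat) \<Rightarrow> 'a::zero) \<Rightarrow> (nat \<Rightarrow> nat) set" where
  "dsupp P = {\<alpha>. P \<alpha> \<noteq> 0}"

definition is_diffop :: "nat \<Rightarrow> ((nat \<Rightarrow> nat) \<Rightarrow> 'a::zero) \<Rightarrow> bool" where
  "is_diffop n P \<longleftrightarrow> finite (dsupp P) \<and> dsupp P \<subseteq> multi_idx n"

text \<open>Composition of operators (Leibniz rule):
  (a D^alpha)(b D^beta) = sum_{gamma <= alpha} binom(alpha,gamma) a (D^gamma b) D^(alpha-gamma+beta).
  Addition, subtraction and negation of operators are pointwise on coefficients.\<close>
definition dmul :: "(nat \<Rightarrow> 'a \<Rightarrow> 'a) \<Rightarrow> nat \<Rightarrow> ((nat \<Rightarrow> nat) \<Rightarrow> 'a::field)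
    \<Rightarrow> ((nat \<Rightarrow> nat) \<Rightarrow> 'a) \<Rightarrow> ((nat \<Rightarrow> nat) \<Rightarrow> 'a)" where
  "dmul d n P Q = (\<lambda>\<mu>. \<Sum>\<alpha>\<in>dsupp P. \<Sum>\<beta>\<in>dsupp Q. \<Sum>\<gamma>\<in>{\<gamma>. \<gamma> \<le> \<alpha>}.
      if (\<lambda>i. \<alpha> i - \<gamma> i + \<beta> i) = \<mu> then of_nat (mbinom n \<alpha> \<gamma>) * P \<alpha> * dmono d n \<gamma> (Q \<beta>) else 0)"

definition dcomm :: "(nat \<Rightarrow> 'a \<Rightarrow> 'a) \<Rightarrow> nat \<Rightarrow> ((nat \<Rightarrow> nat) \<Rightarrow> 'a::field)
    \<Rightarrow> ((nat \<Rightarrow> nat) \<Rightarrow> 'a) \<Rightarrow> ((nat \<Rightarrow> nat) \<Rightarrow> 'a)" where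
  "dcomm d n A B = (\<lambda>\<mu>. dmul d n A B \<mu> - dmul d n B A \<mu>)"

text \<open>order of an operator (order of the zero operator taken as 0; its symbol is 0)\<close>
definition dord :: "nat \<Rightarrow> ((nat \<Rightarrow> nat) \<Rightarrow> 'a::zero) \<Rightarrow> nat" where
  "dord n P = Max (insert 0 (mdeg n ` dsupp P))"

text \<open>principal symbol: the coefficients of the top-order part, i.e. the homogeneous
  polynomial sum_{|alpha| = ord P} P alpha xi^alpha, represented by its coefficient function\<close>
definition dsym :: "nat \<Rightarrow> ((nat \<Rightarrow> nat) \<Rightarrow> 'a::zero) \<Rightarrow> ((nat \<Rightarrow> nat) \<Rightarrow> 'a)" where
  "dsym n P = (\<lambda>\<alpha>. if mdeg n \<alpha> = dord n P then P \<alpha> else 0)"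

end

theory Submission
  imports Defs
begin

text \<open>Let operators act on coefficient sequences, i.e. on formal power series in \<open>x\<close> with
  coefficients in the differential field. The Leibniz-rule product becomes composition of actions,
  and the action is faithful (test on the sequence concentrated at a multi-index), so identities
  between operators may be verified on actions. In this way \<open>\<omega>H = -[X\<^sub>2, H]\<close> yields the
  intertwining relations \<open>(\<omega> + X\<^sub>2)H = HX\<^sub>2\<close> and \<open>(\<omega> + X\<^sub>2)L = L\<^sub>1X\<^sub>2\<close>.

  The principal symbol is multiplicative, and products of nonzero symbols are nonzero since their
  reverse-lexicographically leading terms multiply. The first relation therefore gives
  \<open>Sym (\<omega> + X\<^sub>2) = Sym X\<^sub>2\<close>, and cancelling \<open>Sym X\<^sub>2\<close> in the second gives \<open>Sym L = Sym L\<^sub>1\<close>;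
  if \<open>X\<^sub>2 = 0\<close> then \<open>\<omega> = 0\<close> and \<open>L = L\<^sub>1\<close> outright.\<close>

definition additive_op :: "(('b \<Rightarrow> 'a::ab_group_add) \<Rightarrow> ('b \<Rightarrow> 'a)) \<Rightarrow> bool" where
  "additive_op T \<longleftrightarrow> (\<forall>f g. T (\<lambda>v. f v + g v) = (\<lambda>v. T f v + T g v))"

lemma additive_opD: "additive_op T \<Longrightarrow> T (\<lambda>v. f v + g v) = (\<lambda>v. T f v + T g v)"
  unfolding additive_op_def by blast

lemma additive_op_diff:
  assumes "additive_op T"
  shows "T (\<lambda>v. f v - g v) = (\<lambda>v. T f v - T g v)"
proof -
  have "T f = (\<lambda>v. T (\<lambda>v. f v - g v) v + T g v)"
    using additive_opD[OF assms, of "\<lambda>v. f v - g v" g] by simp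
  then show ?thesis by (simp add: algebra_simps)
qed

lemma additive_op_zero: "additive_op T \<Longrightarrow> T (\<lambda>v. 0) = (\<lambda>v. 0)"
  using additive_op_diff[of T "\<lambda>v. 0" "\<lambda>v. 0"] by simp

lemma additive_op_sum:
  assumes "additive_op T"
  shows "T (\<lambda>v. \<Sum>s\<in>S. h s v) = (\<lambda>v. \<Sum>s\<in>S. T (h s) v)"
proof (induction S rule: infinite_finite_induct)
  case (insert x F)
  then show ?case using additive_opD[OF assms, of "h x" "\<lambda>v. \<Sum>s\<in>F. h s v"] by simp
qed (simp_all add: additive_op_zero[OF assms])

lemma additive_op_id: "additive_op id"
  unfolding additive_op_def by simp

lemma additive_op_comp: "additive_op S \<Longrightarrow> additive_op T \<Longrightarrow> additive_op (S \<circ> T)"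
  unfolding additive_op_def by simp

lemma additive_op_funpow: "additive_op T \<Longrightarrow> additive_op (T ^^ k)"
  by (induction k) (auto simp: additive_op_id additive_op_comp)

lemma funpow_commute:
  assumes "\<And>x. f (g x) = g (f x)"
  shows "(f ^^ a) ((g ^^ b) x) = (g ^^ b) ((f ^^ a) x)"
proof -
  have fg: "f ((g ^^ b) x) = (g ^^ b) (f x)" for x
    by (induction b arbitrary: x) (simp_all add: assms)
  show ?thesis by (induction a arbitrary: x) (simp_all add: fg)
qed

lemma sum_choose_Suc_split:
  fixes T :: "nat \<Rightarrow> 'a::comm_ring_1"
  shows "(\<Sum>j\<le>Suc k. of_nat (Suc k choose j) * T j)
       = (\<Sum>j\<le>k. of_nat (k choose j) * T (Suc j)) + (\<Sum>j\<le>k. of_nat (k choose j) * T j)"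
proof -
  have shift: "(\<Sum>j\<le>Suc k. of_nat (k choose j) * T j) = T 0 + (\<Sum>j\<le>k. of_nat (k choose Suc j) * T (Suc j))"
    by (subst sum.atMost_Suc_shift) simp
  have "(\<Sum>j\<le>Suc k. of_nat (Suc k choose j) * T j)
      = T 0 + (\<Sum>j\<le>k. of_nat (k choose j) * T (Suc j)) + (\<Sum>j\<le>k. of_nat (k choose Suc j) * T (Suc j))"
    by (subst sum.atMost_Suc_shift) (simp add: sum.distrib algebra_simps)
  also have "\<dots> = (\<Sum>j\<le>k. of_nat (k choose j) * T (Suc j)) + (\<Sum>j\<le>Suc k. of_nat (k choose j) * T j)"
    unfolding shift by simp
  also have "(\<Sum>j\<le>Suc k. of_nat (k choose j) * T j) = (\<Sum>j\<le>k. of_nat (k choose j) * T j)"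
    by (simp add: binomial_eq_0)
  finally show ?thesis .
qed

lemma sum_collect_by_image:
  assumes "finite M" and "finite I" and "e ` I \<subseteq> M"
  shows "(\<Sum>\<mu>\<in>M. (\<Sum>t\<in>I. if e t = \<mu> then c t else 0) * f \<mu>) = (\<Sum>t\<in>I. c t * f (e t) :: 'a::semiring_0)"
proof -
  have "(\<Sum>\<mu>\<in>M. (\<Sum>t\<in>I. if e t = \<mu> then c t else 0) * f \<mu>)
      = (\<Sum>\<mu>\<in>M. \<Sum>t\<in>I. if e t = \<mu> then c t * f \<mu> else 0)"
    unfolding sum_distrib_right by (intro sum.cong refl) simp
  also have "\<dots> = (\<Sum>t\<in>I. \<Sum>\<mu>\<in>M. if e t = \<mu> then c t * f \<mu> else 0)"
    by (rule sum.swap)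
  also have "\<dots> = (\<Sum>t\<in>I. c t * f (e t))"
    using assms by (intro sum.cong refl) (auto simp: sum.delta)
  finally show ?thesis .
qed

lemma sum_Sigma_times:
  assumes "finite A" and "finite B" and "\<And>a. a \<in> A \<Longrightarrow> finite (C a)"
  shows "(\<Sum>t\<in>(SIGMA a:A. B \<times> C a). f t) = (\<Sum>a\<in>A. \<Sum>b\<in>B. \<Sum>c\<in>C a. f (a, b, c))"
proof -
  have "(\<Sum>t\<in>(SIGMA a:A. B \<times> C a). f t) = (\<Sum>a\<in>A. \<Sum>bc\<in>B \<times> C a. f (a, bc))"
    using assms by (subst sum.Sigma) (auto simp: split_def)
  also have "\<dots> = (\<Sum>a\<in>A. \<Sum>b\<in>B. \<Sum>c\<in>C a. f (a, b, c))"
    by (simp add: sum.cartesian_product split_def)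
  finally show ?thesis .
qed

section \<open>Differential operators acting on formal power series\<close>

text \<open>A coefficient sequence \<open>g\<close> stands for the formal series \<open>\<Sum>v. g v x^v\<close>; the operator
  \<open>D\<^sub>i\<close> acts on it by the derivation on the coefficients plus the formal partial derivative.\<close>

definition Dseq :: "(nat \<Rightarrow> 'a \<Rightarrow> 'a) \<Rightarrow> nat \<Rightarrow> ((nat \<Rightarrow> nat) \<Rightarrow> 'a::field) \<Rightarrow> ((nat \<Rightarrow> nat) \<Rightarrow> 'a)" where
  "Dseq d i g = (\<lambda>v. d i (g v) + of_nat (Suc (v i)) * g (v(i := Suc (v i))))"

definition Dmono_on :: "(nat \<Rightarrow> 'a \<Rightarrow> 'a) \<Rightarrow> nat list \<Rightarrow> (nat \<Rightarrow> nat)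
    \<Rightarrow> ((nat \<Rightarrow> nat) \<Rightarrow> 'a::field) \<Rightarrow> ((nat \<Rightarrow> nat) \<Rightarrow> 'a)" where
  "Dmono_on d xs \<alpha> = foldr (\<lambda>i f. (Dseq d i ^^ \<alpha> i) \<circ> f) xs id"

definition dmono_on :: "(nat \<Rightarrow> 'a \<Rightarrow> 'a) \<Rightarrow> nat list \<Rightarrow> (nat \<Rightarrow> nat) \<Rightarrow> 'a \<Rightarrow> 'a" where
  "dmono_on d xs \<alpha> = foldr (\<lambda>i f. (d i ^^ \<alpha> i) \<circ> f) xs id"

lemma Dmono_on_Nil [simp]: "Dmono_on d [] \<alpha> = id"
  by (simp add: Dmono_on_def)

lemma Dmono_on_Cons [simp]: "Dmono_on d (x # xs) \<alpha> = (Dseq d x ^^ \<alpha> x) \<circ> Dmono_on d xs \<alpha>"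
  by (simp add: Dmono_on_def)

lemma dmono_on_Nil [simp]: "dmono_on d [] \<alpha> = id"
  by (simp add: dmono_on_def)

lemma dmono_on_Cons [simp]: "dmono_on d (x # xs) \<alpha> = (d x ^^ \<alpha> x) \<circ> dmono_on d xs \<alpha>"
  by (simp add: dmono_on_def)

lemma Dmono_on_cong: "(\<And>i. i \<in> set xs \<Longrightarrow> \<alpha> i = \<beta> i) \<Longrightarrow> Dmono_on d xs \<alpha> = Dmono_on d xs \<beta>"
  by (induction xs) auto

lemma dmono_on_cong: "(\<And>i. i \<in> set xs \<Longrightarrow> \<alpha> i = \<beta> i) \<Longrightarrow> dmono_on d xs \<alpha> = dmono_on d xs \<beta>"
  by (induction xs) auto

lemma dmono_on_zero: "dmono_on d xs (\<lambda>_. 0) = id"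
  by (induction xs) auto

lemma dmono_eq_dmono_on: "dmono d n \<gamma> = dmono_on d [0..<n] \<gamma>"
  by (simp add: dmono_def dmono_on_def)

locale differential_field =
  fixes n :: nat and d :: "nat \<Rightarrow> 'a::field_char_0 \<Rightarrow> 'a"
  assumes diff_field: "diff_field n d"
begin

lemma d_add: "i < n \<Longrightarrow> d i (a + b) = d i a + d i b"
  using diff_field by (simp add: diff_field_def)

lemma d_mult: "i < n \<Longrightarrow> d i (a * b) = d i a * b + a * d i b"
  using diff_field by (simp add: diff_field_def)

lemma d_commute: "i < n \<Longrightarrow> j < n \<Longrightarrow> d i (d j a) = d j (d i a)"
  using diff_field by (simp add: diff_field_def)

lemma d_zero: "i < n \<Longrightarrow> d i 0 = 0"
  using d_add[of i 0 0] by simp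

lemma d_one: "i < n \<Longrightarrow> d i 1 = 0"
  using d_mult[of i 1 1] by simp

lemma d_of_nat: "i < n \<Longrightarrow> d i (of_nat k) = 0"
  by (induction k) (auto simp: d_zero d_add d_one)

lemma d_of_nat_mult: "i < n \<Longrightarrow> d i (of_nat k * a) = of_nat k * d i a"
  by (simp add: d_mult d_of_nat)

lemma d_funpow_of_nat_mult: "i < n \<Longrightarrow> (d i ^^ j) (of_nat k * a) = of_nat k * (d i ^^ j) a"
  by (induction j) (auto simp: d_of_nat_mult)

lemma additive_op_Dseq: "i < n \<Longrightarrow> additive_op (Dseq d i)"
  unfolding additive_op_def Dseq_def by (auto simp: d_add algebra_simps)

lemma additive_op_Dmono_on: "set xs \<subseteq> {..<n} \<Longrightarrow> additive_op (Dmono_on d xs \<alpha>)"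
  by (induction xs) (auto simp: additive_op_id additive_op_comp additive_op_funpow additive_op_Dseq)

lemma Dseq_mult: "i < n \<Longrightarrow> Dseq d i (\<lambda>v. b * g v) = (\<lambda>v. d i b * g v + b * Dseq d i g v)"
  unfolding Dseq_def by (auto simp: d_mult algebra_simps)

lemma Dseq_commute: "i < n \<Longrightarrow> j < n \<Longrightarrow> Dseq d i (Dseq d j g) = Dseq d j (Dseq d i g)"
  by (cases "i = j")
    (auto simp: Dseq_def d_add d_of_nat_mult d_commute fun_upd_twist algebra_simps)

lemma Dseq_funpow_Dmono_on:
  assumes "i < n" and "set xs \<subseteq> {..<n}"
  shows "(Dseq d i ^^ k) (Dmono_on d xs \<alpha> g) = Dmono_on d xs \<alpha> ((Dseq d i ^^ k) g)"
  using assms(2)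
proof (induction xs arbitrary: g)
  case (Cons x xs)
  then have "(Dseq d i ^^ k) ((Dseq d x ^^ \<alpha> x) h) = (Dseq d x ^^ \<alpha> x) ((Dseq d i ^^ k) h)" for h
    using funpow_commute[of "Dseq d i" "Dseq d x"] Dseq_commute assms(1) by simp
  with Cons show ?case by simp
qed simp

lemma Dmono_on_Dmono_on:
  "set xs \<subseteq> {..<n} \<Longrightarrow> Dmono_on d xs \<alpha> (Dmono_on d xs \<beta> g) = Dmono_on d xs (\<lambda>i. \<alpha> i + \<beta> i) g"
proof (induction xs arbitrary: g)
  case (Cons x xs)
  then have x: "x < n" and xs: "set xs \<subseteq> {..<n}" by auto
  have "Dmono_on d (x # xs) \<alpha> (Dmono_on d (x # xs) \<beta> g)
      = (Dseq d x ^^ \<alpha> x) ((Dseq d x ^^ \<beta> x) (Dmono_on d xs \<alpha> (Dmono_on d xs \<beta> g)))"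
    using Dseq_funpow_Dmono_on[OF x xs, of "\<beta> x" \<alpha>] by simp
  then show ?case using Cons.IH[OF xs] by (simp add: funpow_add)
qed simp

lemma Dseq_funpow_mult:
  assumes i: "i < n"
  shows "(Dseq d i ^^ k) (\<lambda>v. b * g v) =
    (\<lambda>v. \<Sum>j\<le>k. of_nat (k choose j) * (d i ^^ j) b * (Dseq d i ^^ (k - j)) g v)"
proof (induction k)
  case (Suc k)
  define T where "T j v = (d i ^^ j) b * (Dseq d i ^^ (Suc k - j)) g v" for j v
  have step: "Dseq d i (\<lambda>v. (of_nat (k choose j) * (d i ^^ j) b) * (Dseq d i ^^ (k - j)) g v) v =
      of_nat (k choose j) * T (Suc j) v + of_nat (k choose j) * T j v" if "j \<le> k" for j v
  proof -
    from that have "Suc k - j = Suc (k - j)" by auto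
    then show ?thesis
      unfolding T_def Dseq_mult[OF i] by (simp add: d_of_nat_mult[OF i] algebra_simps)
  qed
  have "(Dseq d i ^^ Suc k) (\<lambda>v. b * g v) =
      Dseq d i (\<lambda>v. \<Sum>j\<le>k. (of_nat (k choose j) * (d i ^^ j) b) * (Dseq d i ^^ (k - j)) g v)"
    using Suc.IH by (simp add: mult.assoc)
  also have "\<dots> = (\<lambda>v. \<Sum>j\<le>k. of_nat (k choose j) * T (Suc j) v + of_nat (k choose j) * T j v)"
    by (simp add: additive_op_sum[OF additive_op_Dseq[OF i]] step)
  also have "\<dots> = (\<lambda>v. \<Sum>j\<le>Suc k. of_nat (Suc k choose j) * T j v)"
    by (simp only: sum_choose_Suc_split sum.distrib)
  finally show ?case unfolding T_def by (simp add: algebra_simps)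
qed simp

end

definition sub_idx :: "nat list \<Rightarrow> (nat \<Rightarrow> nat) \<Rightarrow> (nat \<Rightarrow> nat) set" where
  "sub_idx xs \<alpha> = {\<gamma>. (\<forall>i. \<gamma> i \<le> \<alpha> i) \<and> (\<forall>i. i \<notin> set xs \<longrightarrow> \<gamma> i = 0)}"

lemma sub_idx_Nil: "sub_idx [] \<alpha> = {\<lambda>_. 0}"
  by (auto simp: sub_idx_def)

lemma sub_idx_Cons:
  assumes "x \<notin> set xs"
  shows "sub_idx (x # xs) \<alpha> = (\<lambda>(\<gamma>, j). \<gamma>(x := j)) ` (sub_idx xs \<alpha> \<times> {..\<alpha> x})"
proof (intro set_eqI iffI)
  fix \<gamma> assume \<gamma>: "\<gamma> \<in> sub_idx (x # xs) \<alpha>"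
  then have "(\<gamma>(x := 0), \<gamma> x) \<in> sub_idx xs \<alpha> \<times> {..\<alpha> x}" by (auto simp: sub_idx_def)
  then show "\<gamma> \<in> (\<lambda>(\<gamma>, j). \<gamma>(x := j)) ` (sub_idx xs \<alpha> \<times> {..\<alpha> x})"
    by (rule rev_image_eqI) simp
qed (auto simp: sub_idx_def)

lemma inj_on_sub_idx_Cons:
  assumes "x \<notin> set xs"
  shows "inj_on (\<lambda>(\<gamma>, j). \<gamma>(x := j)) (sub_idx xs \<alpha> \<times> {..\<alpha> x})"
proof (rule inj_onI, clarsimp)
  fix \<gamma>1 j1 \<gamma>2 j2 assume "\<gamma>1 \<in> sub_idx xs \<alpha>" "\<gamma>2 \<in> sub_idx xs \<alpha>" and e: "\<gamma>1(x := j1) = \<gamma>2(x := j2)"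
  then have "\<gamma>1 x = 0" "\<gamma>2 x = 0" using assms by (auto simp: sub_idx_def)
  moreover have "j1 = j2" using fun_cong[OF e, of x] by simp
  ultimately show "\<gamma>1 = \<gamma>2 \<and> j1 = j2" using e by (metis fun_upd_triv fun_upd_upd)
qed

lemma finite_sub_idx: "distinct xs \<Longrightarrow> finite (sub_idx xs \<alpha>)"
  by (induction xs) (auto simp: sub_idx_Nil sub_idx_Cons)

lemma sub_idx_upt: "\<alpha> \<in> multi_idx n \<Longrightarrow> sub_idx [0..<n] \<alpha> = {\<gamma>. \<gamma> \<le> \<alpha>}"
  unfolding sub_idx_def multi_idx_def le_fun_def by auto (metis le_zero_eq not_less)

lemma finite_le_multi_idx: "\<alpha> \<in> multi_idx n \<Longrightarrow> finite {\<gamma>. \<gamma> \<le> \<alpha>}"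
  using finite_sub_idx[of "[0..<n]" \<alpha>] sub_idx_upt by simp

context differential_field
begin

theorem Dmono_on_mult:
  assumes "distinct xs" and "set xs \<subseteq> {..<n}"
  shows "Dmono_on d xs \<alpha> (\<lambda>v. b * g v) =
    (\<lambda>v. \<Sum>\<gamma>\<in>sub_idx xs \<alpha>. of_nat (\<Prod>i\<in>set xs. \<alpha> i choose \<gamma> i) * dmono_on d xs \<gamma> b
      * Dmono_on d xs (\<lambda>i. \<alpha> i - \<gamma> i) g v)"
  using assms
proof (induction xs)
  case (Cons x xs)
  then have x: "x < n" and xs: "set xs \<subseteq> {..<n}" "distinct xs" and x_xs: "x \<notin> set xs" by auto
  define c where "c \<gamma> = (\<Prod>i\<in>set xs. \<alpha> i choose \<gamma> i)" for \<gamma>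
  define T where "T \<gamma> v = of_nat (\<Prod>i\<in>set (x # xs). \<alpha> i choose \<gamma> i) * dmono_on d (x # xs) \<gamma> b
      * Dmono_on d (x # xs) (\<lambda>i. \<alpha> i - \<gamma> i) g v" for \<gamma> v
  have expand: "(Dseq d x ^^ \<alpha> x) (\<lambda>v. (of_nat (c \<gamma>) * dmono_on d xs \<gamma> b) * Dmono_on d xs (\<lambda>i. \<alpha> i - \<gamma> i) g v) v
      = (\<Sum>j\<le>\<alpha> x. T (\<gamma>(x := j)) v)" for \<gamma> v
    unfolding Dseq_funpow_mult[OF x]
  proof (rule sum.cong[OF refl])
    fix j
    have "dmono_on d xs (\<gamma>(x := j)) = dmono_on d xs \<gamma>"
      and "Dmono_on d xs (\<lambda>i. \<alpha> i - (\<gamma>(x := j)) i) = Dmono_on d xs (\<lambda>i. \<alpha> i - \<gamma> i)"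
      using x_xs by (auto intro!: dmono_on_cong Dmono_on_cong)
    moreover have "(\<Prod>i\<in>set xs. \<alpha> i choose (\<gamma>(x := j)) i) = c \<gamma>"
      unfolding c_def by (rule prod.cong) (use x_xs in auto)
    ultimately show "of_nat (\<alpha> x choose j) * (d x ^^ j) (of_nat (c \<gamma>) * dmono_on d xs \<gamma> b) *
        (Dseq d x ^^ (\<alpha> x - j)) (Dmono_on d xs (\<lambda>i. \<alpha> i - \<gamma> i) g) v = T (\<gamma>(x := j)) v"
      using x_xs by (simp add: T_def d_funpow_of_nat_mult[OF x] mult_ac)
  qed
  have "Dmono_on d (x # xs) \<alpha> (\<lambda>v. b * g v) = (Dseq d x ^^ \<alpha> x)
      (\<lambda>v. \<Sum>\<gamma>\<in>sub_idx xs \<alpha>. (of_nat (c \<gamma>) * dmono_on d xs \<gamma> b) * Dmono_on d xs (\<lambda>i. \<alpha> i - \<gamma> i) g v)"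
    using Cons.IH[OF xs(2,1)] by (simp add: c_def mult.assoc)
  also have "\<dots> = (\<lambda>v. \<Sum>\<gamma>\<in>sub_idx xs \<alpha>. \<Sum>j\<le>\<alpha> x. T (\<gamma>(x := j)) v)"
    by (simp add: additive_op_sum[OF additive_op_funpow[OF additive_op_Dseq[OF x]]] expand)
  also have "\<dots> = (\<lambda>v. \<Sum>\<gamma>\<in>sub_idx (x # xs) \<alpha>. T \<gamma> v)"
    unfolding sub_idx_Cons[OF x_xs] sum.reindex[OF inj_on_sub_idx_Cons[OF x_xs]]
    by (simp add: sum.cartesian_product split_def)
  finally show ?case unfolding T_def .
qed (simp add: sub_idx_Nil)

end

section \<open>The action of operators and the Leibniz product\<close>

abbreviation Dmono :: "(nat \<Rightarrow> 'a \<Rightarrow> 'a) \<Rightarrow> nat \<Rightarrow> (nat \<Rightarrow> nat)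
    \<Rightarrow> ((nat \<Rightarrow> nat) \<Rightarrow> 'a::field) \<Rightarrow> ((nat \<Rightarrow> nat) \<Rightarrow> 'a)" where
  "Dmono d n \<equiv> Dmono_on d [0..<n]"

definition op_act :: "(nat \<Rightarrow> 'a \<Rightarrow> 'a) \<Rightarrow> nat \<Rightarrow> ((nat \<Rightarrow> nat) \<Rightarrow> 'a::field)
    \<Rightarrow> ((nat \<Rightarrow> nat) \<Rightarrow> 'a) \<Rightarrow> ((nat \<Rightarrow> nat) \<Rightarrow> 'a)" where
  "op_act d n P g = (\<lambda>v. \<Sum>\<alpha>\<in>dsupp P. P \<alpha> * Dmono d n \<alpha> g v)"

lemma op_act_superset:
  "finite A \<Longrightarrow> dsupp P \<subseteq> A \<Longrightarrow> op_act d n P g = (\<lambda>v. \<Sum>\<alpha>\<in>A. P \<alpha> * Dmono d n \<alpha> g v)"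
  unfolding op_act_def by (intro ext sum.mono_neutral_left) (auto simp: dsupp_def)

lemma is_diffop_dsupp_subset:
  "is_diffop n P \<Longrightarrow> is_diffop n Q \<Longrightarrow> dsupp R \<subseteq> dsupp P \<union> dsupp Q \<Longrightarrow> is_diffop n R"
  unfolding is_diffop_def by (meson finite_UnI finite_subset le_sup_iff subset_trans)

lemma is_diffop_add: "is_diffop n (P :: _ \<Rightarrow> 'a::ab_group_add) \<Longrightarrow> is_diffop n Q \<Longrightarrow> is_diffop n (\<lambda>\<mu>. P \<mu> + Q \<mu>)"
  by (erule is_diffop_dsupp_subset) (auto simp: dsupp_def)

lemma is_diffop_diff: "is_diffop n (P :: _ \<Rightarrow> 'a::ab_group_add) \<Longrightarrow> is_diffop n Q \<Longrightarrow> is_diffop n (\<lambda>\<mu>. P \<mu> - Q \<mu>)"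
  by (erule is_diffop_dsupp_subset) (auto simp: dsupp_def)

lemma op_act_add:
  assumes "is_diffop n P" and "is_diffop n Q"
  shows "op_act d n (\<lambda>\<mu>. P \<mu> + Q \<mu>) g = (\<lambda>v. op_act d n P g v + op_act d n Q g v)"
proof -
  have "finite (dsupp P \<union> dsupp Q)" using assms by (simp add: is_diffop_def)
  then show ?thesis
    by (subst (1 2 3) op_act_superset[where A = "dsupp P \<union> dsupp Q"])
      (auto simp: dsupp_def sum.distrib algebra_simps)
qed

lemma op_act_diff:
  assumes "is_diffop n P" and "is_diffop n Q"
  shows "op_act d n (\<lambda>\<mu>. P \<mu> - Q \<mu>) g = (\<lambda>v. op_act d n P g v - op_act d n Q g v)"
proof -
  have "finite (dsupp P \<union> dsupp Q)" using assms by (simp add: is_diffop_def)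
  then show ?thesis
    by (subst (1 2 3) op_act_superset[where A = "dsupp P \<union> dsupp Q"])
      (auto simp: dsupp_def sum_subtractf algebra_simps)
qed

lemma op_act_uminus: "op_act d n (\<lambda>\<mu>. - P \<mu>) g = (\<lambda>v. - op_act d n P g v)"
  unfolding op_act_def dsupp_def by (simp add: sum_negf)

lemma mbinom_upt: "mbinom n \<alpha> \<gamma> = (\<Prod>i\<in>set [0..<n]. \<alpha> i choose \<gamma> i)"
  by (simp add: mbinom_def atLeast0LessThan)

context differential_field
begin

lemma additive_op_Dmono: "additive_op (Dmono d n \<alpha>)"
  by (rule additive_op_Dmono_on) auto

lemma Dmono_Dmono: "Dmono d n \<alpha> (Dmono d n \<beta> g) = Dmono d n (\<lambda>i. \<alpha> i + \<beta> i) g"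
  by (rule Dmono_on_Dmono_on) auto

lemma additive_op_op_act: "additive_op (op_act d n P)"
  unfolding additive_op_def op_act_def
  by (simp add: additive_opD[OF additive_op_Dmono] sum.distrib algebra_simps)

corollary Dmono_mult:
  assumes "\<alpha> \<in> multi_idx n"
  shows "Dmono d n \<alpha> (\<lambda>v. b * g v) = (\<lambda>v. \<Sum>\<gamma>\<in>{\<gamma>. \<gamma> \<le> \<alpha>}.
    of_nat (mbinom n \<alpha> \<gamma>) * dmono d n \<gamma> b * Dmono d n (\<lambda>i. \<alpha> i - \<gamma> i) g v)"
proof -
  have "Dmono d n \<alpha> (\<lambda>v. b * g v) = (\<lambda>v. \<Sum>\<gamma>\<in>sub_idx [0..<n] \<alpha>.
      of_nat (\<Prod>i\<in>set [0..<n]. \<alpha> i choose \<gamma> i) * dmono_on d [0..<n] \<gamma> b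
      * Dmono d n (\<lambda>i. \<alpha> i - \<gamma> i) g v)"
    by (rule Dmono_on_mult) auto
  then show ?thesis unfolding sub_idx_upt[OF assms] mbinom_upt dmono_eq_dmono_on .
qed

end

definition dmul_terms :: "((nat \<Rightarrow> nat) \<Rightarrow> 'a::zero) \<Rightarrow> ((nat \<Rightarrow> nat) \<Rightarrow> 'a)
    \<Rightarrow> ((nat \<Rightarrow> nat) \<times> (nat \<Rightarrow> nat) \<times> (nat \<Rightarrow> nat)) set" where
  "dmul_terms P Q = (SIGMA \<alpha>:dsupp P. dsupp Q \<times> {\<gamma>. \<gamma> \<le> \<alpha>})"

definition dmul_index :: "(nat \<Rightarrow> nat) \<times> (nat \<Rightarrow> nat) \<times> (nat \<Rightarrow> nat) \<Rightarrow> (nat \<Rightarrow> nat)" where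
  "dmul_index = (\<lambda>(\<alpha>, \<beta>, \<gamma>) i. \<alpha> i - \<gamma> i + \<beta> i)"

definition dmul_coeff :: "(nat \<Rightarrow> 'a \<Rightarrow> 'a) \<Rightarrow> nat \<Rightarrow> ((nat \<Rightarrow> nat) \<Rightarrow> 'a::field) \<Rightarrow> ((nat \<Rightarrow> nat) \<Rightarrow> 'a)
    \<Rightarrow> (nat \<Rightarrow> nat) \<times> (nat \<Rightarrow> nat) \<times> (nat \<Rightarrow> nat) \<Rightarrow> 'a" where
  "dmul_coeff d n P Q = (\<lambda>(\<alpha>, \<beta>, \<gamma>). of_nat (mbinom n \<alpha> \<gamma>) * P \<alpha> * dmono d n \<gamma> (Q \<beta>))"

lemma finite_dmul_terms: "is_diffop n P \<Longrightarrow> is_diffop n Q \<Longrightarrow> finite (dmul_terms P Q)"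
  unfolding dmul_terms_def is_diffop_def
  by (auto intro!: finite_SigmaI finite_le_multi_idx)

lemma dmul_eq_sum_dmul_terms:
  assumes "is_diffop n P" and "is_diffop n Q"
  shows "dmul d n P Q \<mu> = (\<Sum>t\<in>dmul_terms P Q. if dmul_index t = \<mu> then dmul_coeff d n P Q t else 0)"
proof -
  have fin: "finite (dsupp P)" "finite (dsupp Q)" "\<And>\<alpha>. \<alpha> \<in> dsupp P \<Longrightarrow> finite {\<gamma>. \<gamma> \<le> \<alpha>}"
    using assms by (auto simp: is_diffop_def intro: finite_le_multi_idx)
  show ?thesis
    unfolding dmul_def dmul_terms_def
    by (subst sum_Sigma_times[OF fin]) (simp_all only: dmul_index_def dmul_coeff_def prod.case)
qed

lemma dsupp_dmul_subset:
  assumes "is_diffop n P" and "is_diffop n Q"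
  shows "dsupp (dmul d n P Q) \<subseteq> dmul_index ` dmul_terms P Q"
proof
  fix \<mu> assume "\<mu> \<in> dsupp (dmul d n P Q)"
  then have "(\<Sum>t\<in>dmul_terms P Q. if dmul_index t = \<mu> then dmul_coeff d n P Q t else 0) \<noteq> 0"
    by (simp add: dsupp_def dmul_eq_sum_dmul_terms[OF assms])
  then obtain t where "t \<in> dmul_terms P Q" "(if dmul_index t = \<mu> then dmul_coeff d n P Q t else 0) \<noteq> 0"
    by (rule sum.not_neutral_contains_not_neutral)
  then show "\<mu> \<in> dmul_index ` dmul_terms P Q" by (auto split: if_splits)
qed

lemma is_diffop_dmul:
  assumes "is_diffop n P" and "is_diffop n Q"
  shows "is_diffop n (dmul d n P Q)"
proof -
  have "dmul_index ` dmul_terms P Q \<subseteq> multi_idx n"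
    using assms unfolding dmul_index_def dmul_terms_def is_diffop_def multi_idx_def by auto
  then show ?thesis
    using dsupp_dmul_subset[OF assms] finite_dmul_terms[OF assms] unfolding is_diffop_def
    by (meson finite_imageI finite_subset subset_trans)
qed

context differential_field
begin

theorem op_act_dmul:
  assumes P: "is_diffop n P" and Q: "is_diffop n Q"
  shows "op_act d n (dmul d n P Q) g = op_act d n P (op_act d n Q g)"
proof
  fix v
  let ?I = "dmul_terms P Q" and ?e = dmul_index and ?c = "dmul_coeff d n P Q"
  have fin: "finite (dsupp P)" "finite (dsupp Q)" "\<And>\<alpha>. \<alpha> \<in> dsupp P \<Longrightarrow> finite {\<gamma>. \<gamma> \<le> \<alpha>}"
    and P_idx: "dsupp P \<subseteq> multi_idx n"
    using P Q by (auto simp: is_diffop_def intro: finite_le_multi_idx)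
  have "op_act d n (dmul d n P Q) g v = (\<Sum>\<mu>\<in>?e ` ?I. dmul d n P Q \<mu> * Dmono d n \<mu> g v)"
    by (simp add: op_act_superset[OF _ dsupp_dmul_subset[OF P Q]] finite_dmul_terms[OF P Q])
  also have "\<dots> = (\<Sum>t\<in>?I. ?c t * Dmono d n (?e t) g v)"
    unfolding dmul_eq_sum_dmul_terms[OF P Q]
    by (rule sum_collect_by_image) (simp_all add: finite_dmul_terms[OF P Q])
  also have "\<dots> = (\<Sum>\<alpha>\<in>dsupp P. \<Sum>\<beta>\<in>dsupp Q. \<Sum>\<gamma>\<in>{\<gamma>. \<gamma> \<le> \<alpha>}.
      of_nat (mbinom n \<alpha> \<gamma>) * P \<alpha> * dmono d n \<gamma> (Q \<beta>) * Dmono d n (\<lambda>i. \<alpha> i - \<gamma> i + \<beta> i) g v)"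
    unfolding dmul_terms_def
    by (subst sum_Sigma_times[OF fin]) (simp_all only: dmul_index_def dmul_coeff_def prod.case)
  also have "\<dots> = (\<Sum>\<alpha>\<in>dsupp P. P \<alpha> * Dmono d n \<alpha> (\<lambda>v. \<Sum>\<beta>\<in>dsupp Q. Q \<beta> * Dmono d n \<beta> g v) v)"
  proof (rule sum.cong[OF refl])
    fix \<alpha> assume "\<alpha> \<in> dsupp P"
    then have \<alpha>: "\<alpha> \<in> multi_idx n" using P_idx by auto
    have "Dmono d n \<alpha> (\<lambda>v. \<Sum>\<beta>\<in>dsupp Q. Q \<beta> * Dmono d n \<beta> g v) v
        = (\<Sum>\<beta>\<in>dsupp Q. Dmono d n \<alpha> (\<lambda>v. Q \<beta> * Dmono d n \<beta> g v) v)"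
      by (simp add: additive_op_sum[OF additive_op_Dmono])
    also have "\<dots> = (\<Sum>\<beta>\<in>dsupp Q. \<Sum>\<gamma>\<in>{\<gamma>. \<gamma> \<le> \<alpha>}.
        of_nat (mbinom n \<alpha> \<gamma>) * dmono d n \<gamma> (Q \<beta>) * Dmono d n (\<lambda>i. \<alpha> i - \<gamma> i + \<beta> i) g v)"
      by (simp add: Dmono_mult[OF \<alpha>] Dmono_Dmono)
    finally show "(\<Sum>\<beta>\<in>dsupp Q. \<Sum>\<gamma>\<in>{\<gamma>. \<gamma> \<le> \<alpha>}. of_nat (mbinom n \<alpha> \<gamma>) * P \<alpha> * dmono d n \<gamma> (Q \<beta>)
        * Dmono d n (\<lambda>i. \<alpha> i - \<gamma> i + \<beta> i) g v)
      = P \<alpha> * Dmono d n \<alpha> (\<lambda>v. \<Sum>\<beta>\<in>dsupp Q. Q \<beta> * Dmono d n \<beta> g v) v"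
      by (simp add: sum_distrib_left mult_ac)
  qed
  also have "\<dots> = op_act d n P (op_act d n Q g) v"
    unfolding op_act_def ..
  finally show "op_act d n (dmul d n P Q) g v = op_act d n P (op_act d n Q g) v" .
qed

end

section \<open>Faithfulness of the action\<close>

context differential_field
begin

definition coeff_const :: "((nat \<Rightarrow> nat) \<Rightarrow> 'a) \<Rightarrow> bool" where
  "coeff_const g \<longleftrightarrow> (\<forall>i<n. \<forall>v. d i (g v) = 0)"

lemma Dseq_coeff_const:
  "i < n \<Longrightarrow> coeff_const g \<Longrightarrow> Dseq d i g = (\<lambda>v. of_nat (Suc (v i)) * g (v(i := Suc (v i))))"
  unfolding Dseq_def coeff_const_def by simp

lemma coeff_const_Dseq:
  assumes "i < n" and "coeff_const g"
  shows "coeff_const (Dseq d i g)"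
  unfolding coeff_const_def Dseq_coeff_const[OF assms]
proof (intro allI impI)
  fix j v assume j: "j < n"
  show "d j (of_nat (Suc (v i)) * g (v(i := Suc (v i)))) = 0"
    using assms(2) j by (simp only: d_of_nat_mult[OF j]) (simp add: coeff_const_def)
qed

lemma coeff_const_Dseq_funpow: "i < n \<Longrightarrow> coeff_const g \<Longrightarrow> coeff_const ((Dseq d i ^^ k) g)"
  by (induction k) (auto simp: coeff_const_Dseq)

lemma coeff_const_Dmono_on: "set xs \<subseteq> {..<n} \<Longrightarrow> coeff_const g \<Longrightarrow> coeff_const (Dmono_on d xs \<beta> g)"
  by (induction xs) (auto simp: coeff_const_Dseq_funpow)

lemma Dseq_funpow_coeff_const:
  assumes "i < n" and "coeff_const g"
  shows "(Dseq d i ^^ k) g v = of_nat (\<Prod>t\<in>{1..k}. v i + t) * g (v(i := v i + k))"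
  using assms(2)
proof (induction k arbitrary: g v)
  case (Suc k)
  have "(Dseq d i ^^ Suc k) g v = (Dseq d i ^^ k) (Dseq d i g) v"
    by (simp only: funpow_Suc_right comp_apply)
  also have "\<dots> = of_nat (\<Prod>t\<in>{1..k}. v i + t) * Dseq d i g (v(i := v i + k))"
    by (rule Suc.IH[OF coeff_const_Dseq[OF assms(1) Suc.prems]])
  also have "\<dots> = of_nat (\<Prod>t\<in>{1..k}. v i + t) * (of_nat (v i + Suc k) * g (v(i := v i + Suc k)))"
    by (simp only: Dseq_coeff_const[OF assms(1) Suc.prems] fun_upd_same fun_upd_upd add_Suc_right)
  also have "\<dots> = of_nat (\<Prod>t\<in>{1..Suc k}. v i + t) * g (v(i := v i + Suc k))"
    by (simp only: prod.nat_ivl_Suc'[of 1 k] of_nat_mult mult_ac)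
  finally show ?case .
qed simp

lemma Dmono_on_coeff_const:
  assumes "distinct xs" and "set xs \<subseteq> {..<n}" and "coeff_const g"
  shows "Dmono_on d xs \<beta> g v = of_nat (\<Prod>i\<in>set xs. \<Prod>t\<in>{1..\<beta> i}. v i + t)
    * g (\<lambda>i. if i \<in> set xs then v i + \<beta> i else v i)"
  using assms(1,2)
proof (induction xs arbitrary: v)
  case (Cons x xs)
  then have x: "x < n" and xs: "distinct xs" "set xs \<subseteq> {..<n}" and x_xs: "x \<notin> set xs" by auto
  let ?w = "v(x := v x + \<beta> x)"
  have "Dmono_on d (x # xs) \<beta> g v = of_nat (\<Prod>t\<in>{1..\<beta> x}. v x + t) * Dmono_on d xs \<beta> g ?w"
    using Dseq_funpow_coeff_const[OF x coeff_const_Dmono_on[OF xs(2) assms(3)]] by simp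
  also have "\<dots> = of_nat (\<Prod>t\<in>{1..\<beta> x}. v x + t) * (of_nat (\<Prod>i\<in>set xs. \<Prod>t\<in>{1..\<beta> i}. ?w i + t)
      * g (\<lambda>i. if i \<in> set xs then ?w i + \<beta> i else ?w i))"
    using Cons.IH[OF xs] by simp
  also have "(\<Prod>i\<in>set xs. \<Prod>t\<in>{1..\<beta> i}. ?w i + t) = (\<Prod>i\<in>set xs. \<Prod>t\<in>{1..\<beta> i}. v i + t)"
    by (rule prod.cong) (use x_xs in auto)
  also have "(\<lambda>i. if i \<in> set xs then ?w i + \<beta> i else ?w i) = (\<lambda>i. if i \<in> set (x # xs) then v i + \<beta> i else v i)"
    using x_xs by auto
  finally show ?case using x_xs by (simp add: mult_ac)
qed simp

lemma op_act_indicator: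
  assumes "is_diffop n P"
  shows "op_act d n P (\<lambda>v. if v = \<alpha> then 1 else 0) (\<lambda>_. 0) = P \<alpha> * of_nat (\<Prod>i<n. fact (\<alpha> i))"
proof -
  have fin: "finite (dsupp P)" and idx: "dsupp P \<subseteq> multi_idx n"
    using assms by (auto simp: is_diffop_def)
  have const: "coeff_const (\<lambda>v. if v = \<alpha> then 1 else 0)"
    unfolding coeff_const_def by (auto simp: d_one d_zero)
  have "Dmono d n \<beta> (\<lambda>v. if v = \<alpha> then 1 else 0) (\<lambda>_. 0) = (if \<beta> = \<alpha> then of_nat (\<Prod>i<n. fact (\<beta> i)) else 0)"
    if "\<beta> \<in> multi_idx n" for \<beta>
  proof -
    have "(\<lambda>i. if i \<in> set [0..<n] then 0 + \<beta> i else 0) = \<beta>"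
      using that by (auto simp: multi_idx_def)
    moreover have "(\<Prod>i\<in>set [0..<n]. \<Prod>t\<in>{1..\<beta> i}. (0::nat) + t) = (\<Prod>i<n. fact (\<beta> i))"
      by (simp add: fact_prod atLeast0LessThan)
    moreover have "Dmono d n \<beta> (\<lambda>v. if v = \<alpha> then 1 else 0) (\<lambda>_. 0)
        = of_nat (\<Prod>i\<in>set [0..<n]. \<Prod>t\<in>{1..\<beta> i}. (0::nat) + t)
          * (if (\<lambda>i. if i \<in> set [0..<n] then 0 + \<beta> i else 0) = \<alpha> then 1 else 0)"
      by (rule Dmono_on_coeff_const[OF _ _ const]) auto
    ultimately show ?thesis by auto
  qed
  then have "op_act d n P (\<lambda>v. if v = \<alpha> then 1 else 0) (\<lambda>_. 0)
      = (\<Sum>\<beta>\<in>dsupp P. if \<beta> = \<alpha> then P \<alpha> * of_nat (\<Prod>i<n. fact (\<alpha> i)) else 0)"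
    unfolding op_act_def using idx by (intro sum.cong) auto
  also have "\<dots> = P \<alpha> * of_nat (\<Prod>i<n. fact (\<alpha> i))"
    using fin by (simp add: sum.delta') (auto simp: dsupp_def)
  finally show ?thesis .
qed

theorem op_act_inject:
  assumes "is_diffop n P" and "is_diffop n Q" and "\<And>g. op_act d n P g = op_act d n Q g"
  shows "P = Q"
proof
  fix \<alpha>
  have "P \<alpha> * of_nat (\<Prod>i<n. fact (\<alpha> i)) = Q \<alpha> * of_nat (\<Prod>i<n. fact (\<alpha> i))"
    using op_act_indicator[OF assms(1)] op_act_indicator[OF assms(2)] assms(3) by metis
  moreover have "(of_nat (\<Prod>i<n. fact (\<alpha> i)) :: 'a) \<noteq> 0"
    by (simp add: prod_zero_iff)
  ultimately show "P \<alpha> = Q \<alpha>" by simp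
qed

end

section \<open>The intertwining relations\<close>

context differential_field
begin

lemma dmul_add_intertwines:
  assumes X: "is_diffop n X" and H: "is_diffop n H" and \<omega>: "is_diffop n \<omega>"
    and comm: "dmul d n \<omega> H = (\<lambda>\<mu>. - dcomm d n X H \<mu>)"
  shows "dmul d n (\<lambda>\<mu>. \<omega> \<mu> + X \<mu>) H = dmul d n H X"
proof (rule op_act_inject)
  have W: "is_diffop n (\<lambda>\<mu>. \<omega> \<mu> + X \<mu>)" by (rule is_diffop_add[OF \<omega> X])
  show "is_diffop n (dmul d n (\<lambda>\<mu>. \<omega> \<mu> + X \<mu>) H)" and "is_diffop n (dmul d n H X)"
    by (simp_all add: is_diffop_dmul W H X)
  fix g
  have "op_act d n (dmul d n \<omega> H) g = (\<lambda>v. op_act d n (dmul d n H X) g v - op_act d n (dmul d n X H) g v)"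
    unfolding comm dcomm_def op_act_uminus
    by (simp add: op_act_diff is_diffop_dmul X H)
  then show "op_act d n (dmul d n (\<lambda>\<mu>. \<omega> \<mu> + X \<mu>) H) g = op_act d n (dmul d n H X) g"
    by (simp add: op_act_dmul op_act_add W \<omega> X H)
qed

lemma dmul_laplace_intertwines:
  assumes X1: "is_diffop n X1" and X2: "is_diffop n X2" and H: "is_diffop n H" and \<omega>: "is_diffop n \<omega>"
    and WH: "dmul d n (\<lambda>\<mu>. \<omega> \<mu> + X2 \<mu>) H = dmul d n H X2"
  shows "dmul d n (\<lambda>\<mu>. \<omega> \<mu> + X2 \<mu>) (\<lambda>\<mu>. dmul d n X1 X2 \<mu> - H \<mu>)
    = dmul d n (\<lambda>\<mu>. dmul d n X2 X1 \<mu> + dmul d n \<omega> X1 \<mu> - H \<mu>) X2"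
proof (rule op_act_inject)
  let ?W = "\<lambda>\<mu>. \<omega> \<mu> + X2 \<mu>" and ?L = "\<lambda>\<mu>. dmul d n X1 X2 \<mu> - H \<mu>"
    and ?L1 = "\<lambda>\<mu>. dmul d n X2 X1 \<mu> + dmul d n \<omega> X1 \<mu> - H \<mu>"
  have W: "is_diffop n ?W" and L: "is_diffop n ?L" and L1: "is_diffop n ?L1"
    by (simp_all add: is_diffop_add is_diffop_diff is_diffop_dmul X1 X2 H \<omega>)
  show "is_diffop n (dmul d n ?W ?L)" and "is_diffop n (dmul d n ?L1 X2)"
    by (simp_all add: is_diffop_dmul W L L1 X2)
  fix g
  let ?f = "op_act d n X2 g"
  have "op_act d n ?W (op_act d n H g) = op_act d n H ?f"
    using arg_cong[OF WH, of "\<lambda>P. op_act d n P g"] by (simp add: op_act_dmul W H X2)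
  then have "op_act d n (dmul d n ?W ?L) g = (\<lambda>v. op_act d n ?W (op_act d n X1 ?f) v - op_act d n H ?f v)"
    by (simp add: op_act_dmul op_act_diff additive_op_diff[OF additive_op_op_act] W L X1 X2 H
        is_diffop_dmul)
  also have "\<dots> = op_act d n (dmul d n ?L1 X2) g"
    by (simp add: op_act_dmul op_act_add op_act_diff is_diffop_add is_diffop_dmul L1 X1 X2 H \<omega>
        algebra_simps)
  finally show "op_act d n (dmul d n ?W ?L) g = op_act d n (dmul d n ?L1 X2) g" .
qed

end

section \<open>Principal symbols\<close>

definition revlex_less :: "nat \<Rightarrow> (nat \<Rightarrow> nat) \<Rightarrow> (nat \<Rightarrow> nat) \<Rightarrow> bool" where
  "revlex_less n \<alpha> \<beta> \<longleftrightarrow> (\<exists>k<n. \<alpha> k < \<beta> k \<and> (\<forall>i. k < i \<and> i < n \<longrightarrow> \<alpha> i = \<beta> i))"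

lemma revlex_less_irrefl: "\<not> revlex_less n \<alpha> \<alpha>"
  unfolding revlex_less_def by auto

lemma revlex_less_trans:
  assumes "revlex_less n \<alpha> \<beta>" and "revlex_less n \<beta> \<gamma>"
  shows "revlex_less n \<alpha> \<gamma>"
proof -
  obtain k1 k2 where k1: "k1 < n" "\<alpha> k1 < \<beta> k1" "\<forall>i. k1 < i \<and> i < n \<longrightarrow> \<alpha> i = \<beta> i"
    and k2: "k2 < n" "\<beta> k2 < \<gamma> k2" "\<forall>i. k2 < i \<and> i < n \<longrightarrow> \<beta> i = \<gamma> i"
    using assms unfolding revlex_less_def by blast
  show ?thesis unfolding revlex_less_def
  proof (cases k1 k2 rule: linorder_cases)
    case greater
    with k1 k2 show "\<exists>k<n. \<alpha> k < \<gamma> k \<and> (\<forall>i. k < i \<and> i < n \<longrightarrow> \<alpha> i = \<gamma> i)"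
      by (intro exI[of _ k1]) auto
  qed (use k1 k2 in \<open>intro exI[of _ k2]; auto\<close>)+
qed

lemma revlex_less_add_right: "revlex_less n \<alpha> \<beta> \<Longrightarrow> revlex_less n (\<lambda>i. \<alpha> i + \<gamma> i) (\<lambda>i. \<beta> i + \<gamma> i)"
  unfolding revlex_less_def by auto

lemma revlex_less_add_left: "revlex_less n \<alpha> \<beta> \<Longrightarrow> revlex_less n (\<lambda>i. \<gamma> i + \<alpha> i) (\<lambda>i. \<gamma> i + \<beta> i)"
  unfolding revlex_less_def by auto

lemma revlex_less_linear:
  assumes "\<alpha> \<in> multi_idx n" and "\<beta> \<in> multi_idx n" and "\<alpha> \<noteq> \<beta>"
  shows "revlex_less n \<alpha> \<beta> \<or> revlex_less n \<beta> \<alpha>"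
proof -
  define S where "S = {i. i < n \<and> \<alpha> i \<noteq> \<beta> i}"
  have "S \<noteq> {}"
  proof
    assume "S = {}"
    then have "\<alpha> i = \<beta> i" for i
      using assms(1,2) unfolding S_def multi_idx_def by (cases "i < n") auto
    then show False using assms(3) by auto
  qed
  moreover have "finite S" unfolding S_def by simp
  ultimately have "Max S < n" "\<alpha> (Max S) \<noteq> \<beta> (Max S)"
    and above: "\<forall>i. Max S < i \<and> i < n \<longrightarrow> \<alpha> i = \<beta> i"
    using Max_in[of S] Max_ge[of S] unfolding S_def by fastforce+
  then show ?thesis unfolding revlex_less_def by (metis linorder_neqE_nat)
qed

lemma revlex_greatest_exists:
  "finite A \<Longrightarrow> A \<noteq> {} \<Longrightarrow> A \<subseteq> multi_idx n \<Longrightarrow> \<exists>p\<in>A. \<forall>\<alpha>\<in>A. \<alpha> \<noteq> p \<longrightarrow> revlex_less n \<alpha> p"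
proof (induction A rule: finite_ne_induct)
  case (insert x F)
  then obtain p where p: "p \<in> F" "\<forall>\<alpha>\<in>F. \<alpha> \<noteq> p \<longrightarrow> revlex_less n \<alpha> p" by auto
  with insert have "revlex_less n x p \<or> revlex_less n p x" by (intro revlex_less_linear) auto
  with p show ?case by (metis insert_iff revlex_less_trans)
qed auto

lemma revlex_greatest_add_unique:
  assumes p: "\<forall>\<alpha>\<in>A. \<alpha> \<noteq> p \<longrightarrow> revlex_less n \<alpha> p" and q: "\<forall>\<beta>\<in>B. \<beta> \<noteq> q \<longrightarrow> revlex_less n \<beta> q"
    and "\<alpha> \<in> A" "\<beta> \<in> B" and sum_eq: "(\<lambda>i. \<alpha> i + \<beta> i) = (\<lambda>i. p i + q i)"
  shows "\<alpha> = p \<and> \<beta> = q"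
proof (cases "\<alpha> = p")
  case True
  then show ?thesis using sum_eq by (simp add: fun_eq_iff)
next
  case False
  then have "revlex_less n (\<lambda>i. \<alpha> i + \<beta> i) (\<lambda>i. p i + \<beta> i)"
    using p \<open>\<alpha> \<in> A\<close> by (simp add: revlex_less_add_right)
  moreover have "\<beta> = q \<or> revlex_less n (\<lambda>i. p i + \<beta> i) (\<lambda>i. p i + q i)"
    using q \<open>\<beta> \<in> B\<close> by (auto intro: revlex_less_add_left)
  ultimately show ?thesis
    using sum_eq revlex_less_irrefl revlex_less_trans by metis
qed

text \<open>The product of symbols: coefficient functions multiplied as polynomials in \<open>\<xi>\<close>.\<close>

definition conv :: "((nat \<Rightarrow> nat) \<Rightarrow> 'a::comm_ring_1) \<Rightarrow> ((nat \<Rightarrow> nat) \<Rightarrow> 'a) \<Rightarrow> ((nat \<Rightarrow> nat) \<Rightarrow> 'a)" where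
  "conv A B = (\<lambda>\<mu>. \<Sum>\<alpha>\<in>dsupp A. \<Sum>\<beta>\<in>dsupp B. if (\<lambda>i. \<alpha> i + \<beta> i) = \<mu> then A \<alpha> * B \<beta> else 0)"

lemma conv_superset:
  assumes "finite S" and "finite T" and "dsupp A \<subseteq> S" and "dsupp B \<subseteq> T"
  shows "conv A B \<mu> = (\<Sum>\<alpha>\<in>S. \<Sum>\<beta>\<in>T. if (\<lambda>i. \<alpha> i + \<beta> i) = \<mu> then A \<alpha> * B \<beta> else 0)"
proof -
  have "conv A B \<mu> = (\<Sum>\<alpha>\<in>S. \<Sum>\<beta>\<in>dsupp B. if (\<lambda>i. \<alpha> i + \<beta> i) = \<mu> then A \<alpha> * B \<beta> else 0)"
    unfolding conv_def
    by (rule sum.mono_neutral_left[OF assms(1,3)]) (auto simp: dsupp_def intro!: sum.neutral split: if_splits)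
  also have "\<dots> = (\<Sum>\<alpha>\<in>S. \<Sum>\<beta>\<in>T. if (\<lambda>i. \<alpha> i + \<beta> i) = \<mu> then A \<alpha> * B \<beta> else 0)"
    using assms(2,4) by (intro sum.cong refl sum.mono_neutral_left) (auto simp: dsupp_def)
  finally show ?thesis .
qed

lemma conv_commute: "conv A B = conv B A"
  unfolding conv_def
proof (rule ext, subst sum.swap, intro sum.cong refl)
  fix \<mu> \<alpha> \<beta> :: "nat \<Rightarrow> nat"
  have "(\<lambda>i. \<beta> i + \<alpha> i) = (\<lambda>i. \<alpha> i + \<beta> i)" by (simp add: add.commute)
  then show "(if (\<lambda>i. \<beta> i + \<alpha> i) = \<mu> then A \<beta> * B \<alpha> else 0) = (if (\<lambda>i. \<alpha> i + \<beta> i) = \<mu> then B \<alpha> * A \<beta> else 0)"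
    by (simp add: mult.commute)
qed

lemma conv_diff_left:
  assumes "is_diffop n A" and "is_diffop n B" and "is_diffop n C"
  shows "conv (\<lambda>\<alpha>. A \<alpha> - B \<alpha>) C \<mu> = conv A C \<mu> - conv B C \<mu>"
proof -
  let ?S = "dsupp A \<union> dsupp B"
  have fin: "finite ?S" "finite (dsupp C)" using assms by (auto simp: is_diffop_def)
  have "dsupp (\<lambda>\<alpha>. A \<alpha> - B \<alpha>) \<subseteq> ?S" by (auto simp: dsupp_def)
  then show ?thesis
    by (simp add: conv_superset[OF fin] sum_subtractf[symmetric] if_distrib algebra_simps cong: if_cong)
qed

lemma conv_neq_zero:
  fixes A B :: "(nat \<Rightarrow> nat) \<Rightarrow> 'a::idom"
  assumes "is_diffop n A" and "is_diffop n B" and "A \<noteq> (\<lambda>_. 0)" and "B \<noteq> (\<lambda>_. 0)"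
  shows "conv A B \<noteq> (\<lambda>_. 0)"
proof -
  have fin: "finite (dsupp A)" "finite (dsupp B)" and idx: "dsupp A \<subseteq> multi_idx n" "dsupp B \<subseteq> multi_idx n"
    using assms(1,2) by (auto simp: is_diffop_def)
  have "dsupp A \<noteq> {}" "dsupp B \<noteq> {}" using assms(3,4) by (auto simp: dsupp_def)
  then obtain p q where p: "p \<in> dsupp A" "\<forall>\<alpha>\<in>dsupp A. \<alpha> \<noteq> p \<longrightarrow> revlex_less n \<alpha> p"
    and q: "q \<in> dsupp B" "\<forall>\<beta>\<in>dsupp B. \<beta> \<noteq> q \<longrightarrow> revlex_less n \<beta> q"
    using revlex_greatest_exists[OF fin(1) _ idx(1)] revlex_greatest_exists[OF fin(2) _ idx(2)] by blast
  have "(if (\<lambda>i. \<alpha> i + \<beta> i) = (\<lambda>i. p i + q i) then A \<alpha> * B \<beta> else 0)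
      = (if \<alpha> = p then if \<beta> = q then A p * B q else 0 else 0)"
    if "\<alpha> \<in> dsupp A" "\<beta> \<in> dsupp B" for \<alpha> \<beta>
    using revlex_greatest_add_unique[OF p(2) q(2) that] by auto
  then have "conv A B (\<lambda>i. p i + q i)
      = (\<Sum>\<alpha>\<in>dsupp A. \<Sum>\<beta>\<in>dsupp B. if \<alpha> = p then if \<beta> = q then A p * B q else 0 else 0)"
    unfolding conv_def by (intro sum.cong refl) simp
  also have "\<dots> = (\<Sum>\<alpha>\<in>dsupp A. if \<alpha> = p then A p * B q else 0)"
    using fin q(1) by (intro sum.cong refl) (simp add: sum.delta')
  also have "\<dots> = A p * B q"
    using fin p(1) by (simp add: sum.delta')
  also have "\<dots> \<noteq> 0" using p(1) q(1) by (simp add: dsupp_def)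
  finally show ?thesis by metis
qed

lemma conv_cancel_right:
  fixes A B C :: "(nat \<Rightarrow> nat) \<Rightarrow> 'a::idom"
  assumes "is_diffop n A" and "is_diffop n B" and "is_diffop n C" and "C \<noteq> (\<lambda>_. 0)"
    and "conv A C = conv B C"
  shows "A = B"
proof (rule ccontr)
  assume "A \<noteq> B"
  then have "(\<lambda>\<alpha>. A \<alpha> - B \<alpha>) \<noteq> (\<lambda>_. 0)" by (metis (no_types) ext eq_iff_diff_eq_0)
  then have "conv (\<lambda>\<alpha>. A \<alpha> - B \<alpha>) C \<noteq> (\<lambda>_. 0)"
    using conv_neq_zero[OF is_diffop_diff[OF assms(1,2)] assms(3) _ assms(4)] by blast
  then show False using conv_diff_left[OF assms(1-3)] assms(5) by auto
qed

lemma conv_zero_left: "conv (\<lambda>_. 0) B = (\<lambda>_. 0)"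
  by (simp add: conv_def dsupp_def)

lemma conv_zero_right: "conv A (\<lambda>_. 0) = (\<lambda>_. 0)"
  by (simp add: conv_def dsupp_def)

lemma mdeg_add: "mdeg n (\<lambda>i. \<alpha> i + \<beta> i) = mdeg n \<alpha> + mdeg n \<beta>"
  unfolding mdeg_def by (simp add: sum.distrib)

lemma mdeg_diff_add:
  assumes "\<gamma> \<le> \<alpha>"
  shows "mdeg n (\<lambda>i. \<alpha> i - \<gamma> i + \<beta> i) = mdeg n \<alpha> - mdeg n \<gamma> + mdeg n \<beta>" and "mdeg n \<gamma> \<le> mdeg n \<alpha>"
proof -
  from assms have le: "\<forall>i\<in>{..<n}. \<gamma> i \<le> \<alpha> i" by (simp add: le_fun_def)
  then show "mdeg n \<gamma> \<le> mdeg n \<alpha>" unfolding mdeg_def by (intro sum_mono) auto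
  have "(\<Sum>i<n. \<alpha> i - \<gamma> i) = (\<Sum>i<n. \<alpha> i) - (\<Sum>i<n. \<gamma> i)"
    using le by (intro sum_subtractf_nat) auto
  then show "mdeg n (\<lambda>i. \<alpha> i - \<gamma> i + \<beta> i) = mdeg n \<alpha> - mdeg n \<gamma> + mdeg n \<beta>"
    unfolding mdeg_def by (simp only: sum.distrib)
qed

lemma mdeg_eq_0_imp_zero:
  assumes "mdeg n \<gamma> = 0" and "\<gamma> \<le> \<alpha>" and "\<alpha> \<in> multi_idx n"
  shows "\<gamma> = (\<lambda>_. 0)"
proof
  fix i
  show "\<gamma> i = 0"
  proof (cases "i < n")
    case True
    then show ?thesis using assms(1) unfolding mdeg_def by simp
  next
    case False
    have "\<gamma> i \<le> \<alpha> i" using assms(2) by (simp add: le_fun_def)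
    moreover have "\<alpha> i = 0" using assms(3) False by (simp add: multi_idx_def)
    ultimately show ?thesis by simp
  qed
qed

lemma mdeg_le_dord: "finite (dsupp P) \<Longrightarrow> \<alpha> \<in> dsupp P \<Longrightarrow> mdeg n \<alpha> \<le> dord n P"
  unfolding dord_def by (rule Max_ge) auto

lemma dord_attained:
  assumes "finite (dsupp P)" and "dsupp P \<noteq> {}"
  shows "\<exists>\<alpha>\<in>dsupp P. mdeg n \<alpha> = dord n P"
proof -
  have "dord n P = Max (mdeg n ` dsupp P)"
    unfolding dord_def using assms by (simp add: Max_insert)
  moreover have "Max (mdeg n ` dsupp P) \<in> mdeg n ` dsupp P" using assms by (intro Max_in) auto
  ultimately show ?thesis by auto
qed

lemma dsupp_dsym: "dsupp (dsym n P) = {\<alpha>\<in>dsupp P. mdeg n \<alpha> = dord n P}"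
  unfolding dsupp_def dsym_def by auto

lemma is_diffop_dsym: "is_diffop n P \<Longrightarrow> is_diffop n (dsym n P)"
  unfolding is_diffop_def dsupp_dsym by auto

lemma dsym_zero: "dsym n (\<lambda>_. 0 :: 'a::zero) = (\<lambda>_. 0)"
  unfolding dsym_def by simp

lemma dsym_neq_zero:
  assumes "is_diffop n P" and "P \<noteq> (\<lambda>_. 0)"
  shows "dsym n P \<noteq> (\<lambda>_. 0)"
proof -
  have "finite (dsupp P)" "dsupp P \<noteq> {}" using assms by (auto simp: is_diffop_def dsupp_def)
  then obtain \<alpha> where "\<alpha> \<in> dsupp (dsym n P)" using dord_attained[of P n] by (auto simp: dsupp_dsym)
  then show ?thesis by (auto simp: dsupp_def)
qed

lemma conv_dsym_support:
  assumes "conv (dsym n P) (dsym n Q) \<mu> \<noteq> 0"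
  shows "mdeg n \<mu> = dord n P + dord n Q"
proof (rule ccontr)
  assume deg: "mdeg n \<mu> \<noteq> dord n P + dord n Q"
  have "(\<lambda>i. \<alpha> i + \<beta> i) \<noteq> \<mu>" if "\<alpha> \<in> dsupp (dsym n P)" "\<beta> \<in> dsupp (dsym n Q)" for \<alpha> \<beta>
    using that deg mdeg_add[of n \<alpha> \<beta>] by (auto simp: dsupp_dsym)
  then have "conv (dsym n P) (dsym n Q) \<mu> = 0"
    unfolding conv_def by (intro sum.neutral ballI) simp
  with assms show False by simp
qed

text \<open>Above the sum of the orders only the terms with \<open>\<gamma> = 0\<close> of the Leibniz rule survive.\<close>

lemma dmul_top_coeff:
  fixes P Q :: "(nat \<Rightarrow> nat) \<Rightarrow> 'a::field"
  assumes P: "is_diffop n P" and Q: "is_diffop n Q" and deg: "mdeg n \<mu> \<ge> dord n P + dord n Q"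
  shows "dmul d n P Q \<mu> = (if mdeg n \<mu> = dord n P + dord n Q then conv (dsym n P) (dsym n Q) \<mu> else 0)"
proof -
  let ?s = "dord n P + dord n Q"
  have fin: "finite (dsupp P)" "finite (dsupp Q)" and idx: "dsupp P \<subseteq> multi_idx n"
    using P Q by (auto simp: is_diffop_def)
  define R where "R \<alpha> \<beta> = (if mdeg n \<alpha> = dord n P \<and> mdeg n \<beta> = dord n Q \<and> (\<lambda>i. \<alpha> i + \<beta> i) = \<mu>
      \<and> mdeg n \<mu> = ?s then P \<alpha> * Q \<beta> else 0)" for \<alpha> \<beta>
  have top: "(if (\<lambda>i. \<alpha> i - \<gamma> i + \<beta> i) = \<mu> then of_nat (mbinom n \<alpha> \<gamma>) * P \<alpha> * dmono d n \<gamma> (Q \<beta>) else 0)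
      = (if \<gamma> = (\<lambda>_. 0) then R \<alpha> \<beta> else 0)"
    if \<alpha>: "\<alpha> \<in> dsupp P" and \<beta>: "\<beta> \<in> dsupp Q" and \<gamma>: "\<gamma> \<le> \<alpha>" for \<alpha> \<beta> \<gamma>
  proof (cases "(\<lambda>i. \<alpha> i - \<gamma> i + \<beta> i) = \<mu>")
    case True
    have "mdeg n \<alpha> \<le> dord n P" "mdeg n \<beta> \<le> dord n Q"
      using mdeg_le_dord fin \<alpha> \<beta> by blast+
    moreover have "mdeg n \<mu> = mdeg n \<alpha> - mdeg n \<gamma> + mdeg n \<beta>" "mdeg n \<gamma> \<le> mdeg n \<alpha>"
      using mdeg_diff_add[OF \<gamma>] True by auto
    ultimately have "mdeg n \<gamma> = 0" "mdeg n \<alpha> = dord n P" "mdeg n \<beta> = dord n Q" "mdeg n \<mu> = ?s"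
      using deg by linarith+
    moreover from this have "\<gamma> = (\<lambda>_. 0)" using mdeg_eq_0_imp_zero \<gamma> idx \<alpha> by blast
    ultimately show ?thesis
      using True by (simp add: R_def mbinom_def dmono_eq_dmono_on dmono_on_zero)
  qed (auto simp: R_def)
  have "dmul d n P Q \<mu> = (\<Sum>\<alpha>\<in>dsupp P. \<Sum>\<beta>\<in>dsupp Q. \<Sum>\<gamma>\<in>{\<gamma>. \<gamma> \<le> \<alpha>}. if \<gamma> = (\<lambda>_. 0) then R \<alpha> \<beta> else 0)"
    unfolding dmul_def by (intro sum.cong refl) (simp add: top)
  also have "\<dots> = (\<Sum>\<alpha>\<in>dsupp P. \<Sum>\<beta>\<in>dsupp Q. R \<alpha> \<beta>)"
  proof (intro sum.cong refl)
    fix \<alpha> \<beta> assume "\<alpha> \<in> dsupp P"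
    then have "finite {\<gamma>. \<gamma> \<le> \<alpha>}" using idx finite_le_multi_idx by blast
    moreover have "(\<lambda>_. 0) \<in> {\<gamma>. \<gamma> \<le> \<alpha>}" by (simp add: le_fun_def)
    ultimately show "(\<Sum>\<gamma>\<in>{\<gamma>. \<gamma> \<le> \<alpha>}. if \<gamma> = (\<lambda>_. 0) then R \<alpha> \<beta> else 0) = R \<alpha> \<beta>"
      by (simp add: sum.delta')
  qed
  also have "\<dots> = (if mdeg n \<mu> = ?s then conv (dsym n P) (dsym n Q) \<mu> else 0)"
  proof (cases "mdeg n \<mu> = ?s")
    case True
    have "dsupp (dsym n P) \<subseteq> dsupp P" "dsupp (dsym n Q) \<subseteq> dsupp Q" by (auto simp: dsupp_dsym)
    with True show ?thesis
      by (simp add: conv_superset[OF fin]) (intro sum.cong refl; auto simp: R_def dsym_def)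
  qed (simp add: R_def)
  finally show ?thesis .
qed

context differential_field
begin

theorem dsym_dmul:
  assumes P: "is_diffop n P" and Q: "is_diffop n Q"
  shows "dsym n (dmul d n P Q) = conv (dsym n P) (dsym n Q)"
proof (cases "P = (\<lambda>_. 0) \<or> Q = (\<lambda>_. 0)")
  case True
  then show ?thesis
    by (auto simp: dmul_def dsupp_def dsym_zero conv_zero_left conv_zero_right)
next
  case False
  let ?s = "dord n P + dord n Q" and ?C = "conv (dsym n P) (dsym n Q)" and ?PQ = "dmul d n P Q"
  have "finite (dsupp ?PQ)" using is_diffop_dmul[OF P Q] by (simp add: is_diffop_def)
  have "?C \<noteq> (\<lambda>_. 0)"
    using False conv_neq_zero[OF is_diffop_dsym[OF P] is_diffop_dsym[OF Q] dsym_neq_zero[OF P] dsym_neq_zero[OF Q]]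
    by blast
  then obtain \<mu>0 where "?C \<mu>0 \<noteq> 0" by auto
  with conv_dsym_support dmul_top_coeff[OF P Q, of \<mu>0 d] have "\<mu>0 \<in> dsupp ?PQ" "mdeg n \<mu>0 = ?s"
    by (force simp: dsupp_def)+
  moreover have "mdeg n \<mu> \<le> ?s" if "\<mu> \<in> dsupp ?PQ" for \<mu>
  proof (rule ccontr)
    assume "\<not> mdeg n \<mu> \<le> ?s"
    then have "?PQ \<mu> = 0" using dmul_top_coeff[OF P Q, of \<mu> d] by simp
    with that show False by (simp add: dsupp_def)
  qed
  ultimately have ord: "dord n ?PQ = ?s"
    unfolding dord_def using \<open>finite (dsupp ?PQ)\<close> by (intro Max_eqI) force+
  show ?thesis
  proof
    fix \<mu>
    show "dsym n ?PQ \<mu> = ?C \<mu>"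
      using dmul_top_coeff[OF P Q, of \<mu> d] conv_dsym_support[of n P Q \<mu>] ord by (auto simp: dsym_def)
  qed
qed

corollary dmul_neq_zero:
  assumes "is_diffop n P" and "is_diffop n Q" and "P \<noteq> (\<lambda>_. 0)" and "Q \<noteq> (\<lambda>_. 0)"
  shows "dmul d n P Q \<noteq> (\<lambda>_. 0)"
  using dsym_dmul[OF assms(1,2)] dsym_zero
    conv_neq_zero[OF is_diffop_dsym[OF assms(1)] is_diffop_dsym[OF assms(2)]
      dsym_neq_zero[OF assms(1,3)] dsym_neq_zero[OF assms(2,4)]]
  by metis

lemma dsym_eq_if_dmul_conj:
  assumes P: "is_diffop n P" and A: "is_diffop n A" and Q: "is_diffop n Q" and "A \<noteq> (\<lambda>_. 0)"
    and "dmul d n P A = dmul d n A Q"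
  shows "dsym n P = dsym n Q"
proof (rule conv_cancel_right[OF is_diffop_dsym[OF P] is_diffop_dsym[OF Q] is_diffop_dsym[OF A]])
  show "dsym n A \<noteq> (\<lambda>_. 0)" by (rule dsym_neq_zero[OF A assms(4)])
  show "conv (dsym n P) (dsym n A) = conv (dsym n Q) (dsym n A)"
    using arg_cong[OF assms(5), of "dsym n"] by (simp add: dsym_dmul P A Q conv_commute)
qed

lemma dsym_eq_if_dmul_eq:
  assumes P: "is_diffop n P" and A: "is_diffop n A" and B: "is_diffop n B" and Q: "is_diffop n Q"
    and "Q \<noteq> (\<lambda>_. 0)" and "dsym n P = dsym n Q" and "dmul d n P A = dmul d n B Q"
  shows "dsym n A = dsym n B"
proof (rule conv_cancel_right[OF is_diffop_dsym[OF A] is_diffop_dsym[OF B] is_diffop_dsym[OF Q]])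
  show "dsym n Q \<noteq> (\<lambda>_. 0)" by (rule dsym_neq_zero[OF Q assms(5)])
  show "conv (dsym n A) (dsym n Q) = conv (dsym n B) (dsym n Q)"
    using arg_cong[OF assms(7), of "dsym n"] assms(6) by (simp add: dsym_dmul P A B Q conv_commute)
qed

end

theorem lemma1:
  fixes n :: nat and d :: "nat \<Rightarrow> 'a::field_char_0 \<Rightarrow> 'a"
    and L L1 X1 X2 H \<omega> :: "(nat \<Rightarrow> nat) \<Rightarrow> 'a"
  assumes "diff_field n d"
    and "is_diffop n X1" and "is_diffop n X2" and "is_diffop n H"
    and "H \<noteq> (\<lambda>_. 0)"
    and "L = (\<lambda>\<mu>. dmul d n X1 X2 \<mu> - H \<mu>)"
    and "is_diffop n \<omega>"
    and "dmul d n \<omega> H = (\<lambda>\<mu>. - dcomm d n X2 H \<mu>)"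
    and "L1 = (\<lambda>\<mu>. dmul d n X2 X1 \<mu> + dmul d n \<omega> X1 \<mu> - H \<mu>)"
  shows "dsym n L = dsym n L1"
proof -
  interpret differential_field n d by unfold_locales (rule assms(1))
  note X1 = assms(2) and X2 = assms(3) and H = assms(4) and \<omega> = assms(7)
  define W where "W = (\<lambda>\<mu>. \<omega> \<mu> + X2 \<mu>)"
  have W: "is_diffop n W" and L: "is_diffop n L" and L1: "is_diffop n L1"
    unfolding W_def assms(6,9) by (simp_all add: is_diffop_add is_diffop_diff is_diffop_dmul X1 X2 H \<omega>)
  have WH: "dmul d n W H = dmul d n H X2"
    unfolding W_def by (rule dmul_add_intertwines[OF X2 H \<omega> assms(8)])
  have WL: "dmul d n W L = dmul d n L1 X2"
    unfolding W_def assms(6,9) by (rule dmul_laplace_intertwines[OF X1 X2 H \<omega> WH[unfolded W_def]])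
  show ?thesis
  proof (cases "X2 = (\<lambda>_. 0)")
    case True
    then have "dmul d n \<omega> H = (\<lambda>_. 0)"
      using assms(8) by (simp add: dcomm_def dmul_def dsupp_def)
    then have "\<omega> = (\<lambda>_. 0)" using dmul_neq_zero[OF \<omega> H _ assms(5)] by blast
    with True show ?thesis unfolding assms(6,9) by (simp add: dmul_def dsupp_def)
  next
    case False
    have "dsym n W = dsym n X2" by (rule dsym_eq_if_dmul_conj[OF W H X2 assms(5) WH])
    then show ?thesis by (rule dsym_eq_if_dmul_eq[OF W L L1 X2 False _ WL])
  qed
qed

end
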